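(* Under the hypotheses of Theorem 1 (walk $\{S_n\}$, stationary scenery $\{\xi(k)\}$ independent of the walk, $n\mathbb{P}(\xi(0)>u_n)\to\tau\ge0$, conditions $D(u_n)$ and $D'(u_n)$ with sequences $(\alpha_{n,l})$, $(l_n)$, $(k_n)$), and with the blocks $B_j$, stripes $L_j$, $\mathcal{L}_n$ and $K_n$ defined in the context, for almost every realization of $\{S_n,n\in\mathbb{N}_+\}$ the following hold as $n\to\infty$: (i) $\mathbb{P}(M_{\mathcal{S}_n}\le u_n)-\mathbb{P}(M_{\mathcal{S}_n\setminus\mathcal{L}_n}\le u_n)\to0$; (ii) $\mathbb{P}(M_{\mathcal{S}_n\setminus\mathcal{L}_n}\le u_n)-\prod_{j\le K_n}\mathbb{P}(M_{B_j\setminus\mathcal{L}_n}\le u_n)\to0$; (iii) $\prod_{j\le K_n}\mathbb{P}(M_{B_j\setminus\mathcal{L}_n}\le u_n)-\prod_{j\le K_n}\mathbb{P}(M_{B_j}\le u_n)\to0$. All probabilities are with respect to the scenery, with the realization of the walk fixed.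
   Context: Setting: $\{X_k\}$ centered integer-valued i.i.d., in the domain of attraction of an $\alpha$-stable law with $\alpha\in(0,1)$, $S_n=X_1+\cdots+X_n$; $\{\xi(k),k\in\mathbb{Z}\}$ stationary real random variables independent of $\{X_k\}$; $n\mathbb{P}(\xi(0)>u_n)\to\tau\ge0$. Condition $D(u_n)$: with $F_{i_1,\ldots,i_p}(u)=\mathbb{P}(\xi(i_1)\le u,\ldots,\xi(i_p)\le u)$, there exist $(\alpha_{n,l})_{(n,l)\in\mathbb{N}^2}$ and positive integers $(l_n)$ with $\alpha_{n,l_n}\to0$, $l_n=o(n)$, such that $|F_{i_1,\ldots,i_p,j_1,\ldots,j_{p'}}(u_n)-F_{i_1,\ldots,i_p}(u_n)F_{j_1,\ldots,j_{p'}}(u_n)|\le\alpha_{n,l}$ whenever $i_1<\cdots<i_p<j_1<\cdots<j_{p'}$ and $j_1-i_p\ge l$, uniformly in $p,p'$. Condition $D'(u_n)$: there exist integers $(k_n)$ with $k_n\to\infty$, $\frac{n^2}{k_n}\alpha_{n,l_n}\to0$, $k_nl_n=o(n)$, and $n\sum_{j=1}^{\lfloor n/k_n\rfloor}\mathbb{P}(\xi(0)>u_n,\xi(j)>u_n)\to0$. Notation: for $B\subset\mathbb{Z}$, $M_B=\max_{k\in B}\xi(k)$ (with $M_\emptyset=-\infty$). For a fixed realization of the walk, $\mathcal{S}_n=\{S_1,\ldots,S_n\}$, $R_n=\#\mathcal{S}_n$, $r_n=\lfloor n/(k_n-1)\rfloor+1$, $K_n=\lfloor R_n/r_n\rfloor+1$.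 The blocks $B_1,\ldots,B_{K_n}$ are the unique subsets of $\mathcal{S}_n$ with $\bigcup_{j\le K_n}B_j=\mathcal{S}_n$, $\#B_i=r_n$ and $\max B_i<\min B_{i+1}$ for $i\le K_n-1$ (so $\#B_{K_n}=R_n-(K_n-1)r_n$ and $K_n\le k_n$). For $j\le K_n-1$, the stripe $L_j$ is the set of the $l_n$ largest elements of $B_j$; $L_{K_n}$ is the set of the $l_n$ largest elements of $B_{K_n}$ if $\#B_{K_n}\ge l_n$, and $L_{K_n}=\emptyset$ otherwise. $\mathcal{L}_n=\bigcup_{j\le K_n}L_j$. *)

theory Defs
  imports "HOL-Probability.Probability"
begin

definition stable_law :: "real \<Rightarrow> real measure \<Rightarrow> bool" where
  "stable_law \<alpha> \<mu> \<longleftrightarrow> real_distribution \<mu> \<and>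
     (\<exists>c \<beta> \<gamma>. c > 0 \<and> -1 \<le> \<beta> \<and> \<beta> \<le> 1 \<and>
        (\<forall>t. char \<mu> t = exp (- complex_of_real (c * \<bar>t\<bar> powr \<alpha>)
              * (1 - \<i> * complex_of_real (\<beta> * sgn t * tan (pi * \<alpha> / 2)))
              + \<i> * complex_of_real (\<gamma> * t))))"

definition walk_S :: "(nat \<Rightarrow> 'w \<Rightarrow> int) \<Rightarrow> nat \<Rightarrow> 'w \<Rightarrow> int" where
  "walk_S X n \<omega> = (\<Sum>i\<in>{1..n}. X i \<omega>)"

definition centered_domain_of_attraction ::
  "'w measure \<Rightarrow> (nat \<Rightarrow> 'w \<Rightarrow> int) \<Rightarrow> real \<Rightarrow> bool" where
  "centered_domain_of_attraction M X \<alpha> \<longleftrightarrow>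
     (\<exists>a :: nat \<Rightarrow> real. \<exists>\<mu>. (\<forall>n. a n > 0) \<and> stable_law \<alpha> \<mu> \<and>
        weak_conv_m (\<lambda>n. distr M borel (\<lambda>\<omega>. real_of_int (walk_S X n \<omega>) / a n)) \<mu>)"

definition range_set :: "(nat \<Rightarrow> 'w \<Rightarrow> int) \<Rightarrow> nat \<Rightarrow> 'w \<Rightarrow> int set" where
  "range_set X n \<omega> = (\<lambda>i. walk_S X i \<omega>) ` {1..n}"

definition block_len :: "(nat \<Rightarrow> nat) \<Rightarrow> nat \<Rightarrow> nat" where
  "block_len k n = n div (k n - 1) + 1"

definition num_blocks :: "(nat \<Rightarrow> nat) \<Rightarrow> (nat \<Rightarrow> 'w \<Rightarrow> int) \<Rightarrow> nat \<Rightarrow> 'w \<Rightarrow> nat" where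
  "num_blocks k X n \<omega> = card (range_set X n \<omega>) div block_len k n + 1"

definition block :: "(nat \<Rightarrow> nat) \<Rightarrow> (nat \<Rightarrow> 'w \<Rightarrow> int) \<Rightarrow> nat \<Rightarrow> 'w \<Rightarrow> nat \<Rightarrow> int set" where
  "block k X n \<omega> j = set (take (block_len k n)
       (drop ((j - 1) * block_len k n) (sorted_list_of_set (range_set X n \<omega>))))"

(* the m largest elements of a finite set B (all of B if card B < m) *)
definition top_elems :: "nat \<Rightarrow> int set \<Rightarrow> int set" where
  "top_elems m B = set (drop (card B - m) (sorted_list_of_set B))"

definition stripe :: "(nat \<Rightarrow> nat) \<Rightarrow> (nat \<Rightarrow> nat) \<Rightarrow> (nat \<Rightarrow> 'w \<Rightarrow> int) \<Rightarrow> nat \<Rightarrow> 'w \<Rightarrow> nat \<Rightarrow> int set" where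
  "stripe k l X n \<omega> j =
     (if j < num_blocks k X n \<omega> \<or> l n \<le> card (block k X n \<omega> j)
      then top_elems (l n) (block k X n \<omega> j) else {})"

definition stripes :: "(nat \<Rightarrow> nat) \<Rightarrow> (nat \<Rightarrow> nat) \<Rightarrow> (nat \<Rightarrow> 'w \<Rightarrow> int) \<Rightarrow> nat \<Rightarrow> 'w \<Rightarrow> int set" where
  "stripes k l X n \<omega> = (\<Union>j\<in>{1..num_blocks k X n \<omega>}. stripe k l X n \<omega> j)"

(* P(M_B \<le> u) with M_{} = -\<infinity> *)
definition prob_max_le :: "'s measure \<Rightarrow> (int \<Rightarrow> 's \<Rightarrow> real) \<Rightarrow> int set \<Rightarrow> real \<Rightarrow> real" where
  "prob_max_le N \<xi> B u = measure N {s \<in> space N. \<forall>i\<in>B. \<xi> i s \<le> u}"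

end

theory Submission
  imports Defs
begin

(* The three estimates hold for every realization of the walk; only its range S_n matters.
   S_n is cut into K_n <= k_n blocks, so the stripes contain at most k_n l_n points, and
   removing them changes each probability by at most k_n l_n P(xi(0) > u_n) (union bound and
   stationarity), which tends to 0 since k_n l_n = o(n) and n P(xi(0) > u_n) -> tau.
   Outside the stripes, points of different blocks are at least l_n apart, so D(u_n) splits
   off one block at a time with error alpha_{n,l_n}; the total error is at most
   k_n alpha_{n,l_n} = (k_n/n)^2 (n^2/k_n) alpha_{n,l_n} -> 0. *)

section \<open>Blocks and stripes of the range\<close>

lemma in_set_take_drop_iff:
  "x \<in> set (take r (drop d xs)) \<longleftrightarrow> (\<exists>i. d \<le> i \<and> i < d + r \<and> i < length xs \<and> x = xs ! i)"
proof
  assume "x \<in> set (take r (drop d xs))"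
  then obtain t where "t < length (take r (drop d xs))" "x = take r (drop d xs) ! t"
    by (auto simp: in_set_conv_nth)
  then show "\<exists>i. d \<le> i \<and> i < d + r \<and> i < length xs \<and> x = xs ! i"
    by (intro exI[of _ "d + t"]) auto
next
  assume "\<exists>i. d \<le> i \<and> i < d + r \<and> i < length xs \<and> x = xs ! i"
  then obtain i where "d \<le> i" "i < d + r" "i < length xs" "x = xs ! i" by blast
  then have "take r (drop d xs) ! (i - d) = x" "i - d < length (take r (drop d xs))" by auto
  then show "x \<in> set (take r (drop d xs))" by (metis nth_mem)
qed

lemma sorted_wrt_less_nth_add:
  fixes ys :: "int list"
  assumes "sorted_wrt (<) ys" "i + t < length ys"
  shows "ys ! i + int t \<le> ys ! (i + t)"
  using assms(2)
proof (induction t)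
  case (Suc t)
  have "ys ! (i + t) < ys ! (i + Suc t)"
    using sorted_wrt_nth_less[OF assms(1)] Suc.prems by simp
  with Suc show ?case by simp
qed simp

lemma top_elems_subset: "finite B \<Longrightarrow> top_elems m B \<subseteq> B"
  unfolding top_elems_def by (metis set_drop_subset set_sorted_list_of_set)

lemma card_top_elems_le: "card (top_elems m B) \<le> m"
  unfolding top_elems_def by (rule order_trans[OF card_length]) simp

lemma top_elems_gap:
  assumes "finite B" "x \<in> B" "x \<notin> top_elems m B"
  shows "\<exists>z\<in>B. x + int m \<le> z"
proof -
  let ?ys = "sorted_list_of_set B"
  obtain i where i: "i < length ?ys" "x = ?ys ! i"
    using assms by (metis in_set_conv_nth set_sorted_list_of_set)
  have "i + m < length ?ys"
  proof (rule ccontr)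
    assume "\<not> i + m < length ?ys"
    then have "drop (card B - m) ?ys ! (i - (card B - m)) = x"
      "i - (card B - m) < length (drop (card B - m) ?ys)"
      using i by auto
    then have "x \<in> top_elems m B" unfolding top_elems_def by (metis nth_mem)
    with assms(3) show False ..
  qed
  then have "x + int m \<le> ?ys ! (i + m)"
    using sorted_wrt_less_nth_add[OF strict_sorted_list_of_set] i by simp
  moreover have "?ys ! (i + m) \<in> B"
    using nth_mem[OF \<open>i + m < length ?ys\<close>] assms(1) by simp
  ultimately show ?thesis by blast
qed

lemma finite_range_set: "finite (range_set X n \<omega>)"
  unfolding range_set_def by simp

lemma card_range_set_le: "card (range_set X n \<omega>) \<le> n"
  unfolding range_set_def using card_image_le[of "{1..n}"] by simp

lemma finite_block: "finite (block k X n \<omega> j)"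
  unfolding block_def by simp

lemma block_subset_range_set: "block k X n \<omega> j \<subseteq> range_set X n \<omega>"
  unfolding block_def using finite_range_set
  by (metis set_take_subset set_drop_subset dual_order.trans set_sorted_list_of_set)

lemma block_less:
  assumes "1 \<le> j" "j < j'" "x \<in> block k X n \<omega> j" "y \<in> block k X n \<omega> j'"
  shows "x < y"
proof -
  let ?r = "block_len k n"
  let ?xs = "sorted_list_of_set (range_set X n \<omega>)"
  obtain i where i: "i < (j - 1) * ?r + ?r" "x = ?xs ! i"
    using assms(3) unfolding block_def in_set_take_drop_iff by blast
  obtain i' where i': "(j' - 1) * ?r \<le> i'" "i' < length ?xs" "y = ?xs ! i'"
    using assms(4) unfolding block_def in_set_take_drop_iff by blast
  have "(j - 1) * ?r + ?r = j * ?r" using assms(1) by (cases j) auto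
  also have "\<dots> \<le> (j' - 1) * ?r" using assms by (intro mult_right_mono) auto
  finally have "i < i'" using i i' by linarith
  then show ?thesis using i i' sorted_wrt_nth_less[OF strict_sorted_list_of_set] by auto
qed

lemma disjoint_blocks:
  assumes "1 \<le> j" "1 \<le> j'" "j \<noteq> j'"
  shows "block k X n \<omega> j \<inter> block k X n \<omega> j' = {}"
  using block_less[of j j' _ k X n \<omega>] block_less[of j' j _ k X n \<omega>] assms
  by (cases "j < j'") fastforce+

lemma UN_block_eq_range_set:
  "(\<Union>j\<in>{1..num_blocks k X n \<omega>}. block k X n \<omega> j) = range_set X n \<omega>"
proof
  show "(\<Union>j\<in>{1..num_blocks k X n \<omega>}. block k X n \<omega> j) \<subseteq> range_set X n \<omega>"
    using block_subset_range_set[of k X n \<omega>] by blast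
next
  let ?r = "block_len k n"
  let ?xs = "sorted_list_of_set (range_set X n \<omega>)"
  show "range_set X n \<omega> \<subseteq> (\<Union>j\<in>{1..num_blocks k X n \<omega>}. block k X n \<omega> j)"
  proof
    fix x assume "x \<in> range_set X n \<omega>"
    then obtain i where i: "i < length ?xs" "x = ?xs ! i"
      using finite_range_set by (metis in_set_conv_nth set_sorted_list_of_set)
    have r: "?r > 0" unfolding block_len_def by simp
    define j where "j = i div ?r + 1"
    have j1: "j - 1 = i div ?r" unfolding j_def by simp
    have "(j - 1) * ?r \<le> i"
      unfolding j1 by (rule div_times_less_eq_dividend)
    moreover have "i < (j - 1) * ?r + ?r"
      unfolding j1 using div_mult_mod_eq[of i ?r] mod_less_divisor[OF r, of i] by linarith
    ultimately have "x \<in> block k X n \<omega> j"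
      unfolding block_def in_set_take_drop_iff using i by blast
    moreover have "j \<in> {1..num_blocks k X n \<omega>}"
      using i(1) div_le_mono unfolding j_def num_blocks_def by auto
    ultimately show "x \<in> (\<Union>j\<in>{1..num_blocks k X n \<omega>}. block k X n \<omega> j)" by blast
  qed
qed

lemma num_blocks_le:
  assumes "2 \<le> k n"
  shows "num_blocks k X n \<omega> \<le> k n"
proof -
  let ?d = "k n - 1" and ?r = "block_len k n"
  have "?r * ?d = n div ?d * ?d + ?d" unfolding block_len_def by (simp add: distrib_right)
  then have "n < ?r * ?d" using assms div_mult_mod_eq[of n ?d] mod_less_divisor[of ?d n] by linarith
  then have "n div ?r < ?d" by (metis less_mult_imp_div_less mult.commute)
  moreover have "card (range_set X n \<omega>) div ?r \<le> n div ?r"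
    by (rule div_le_mono[OF card_range_set_le])
  ultimately show ?thesis unfolding num_blocks_def by linarith
qed

lemma stripe_subset_block: "stripe k l X n \<omega> j \<subseteq> block k X n \<omega> j"
  unfolding stripe_def using top_elems_subset[OF finite_block, of "l n" k X n \<omega> j] by auto

lemma stripes_subset_range_set: "stripes k l X n \<omega> \<subseteq> range_set X n \<omega>"
  unfolding stripes_def using stripe_subset_block[of k l X n \<omega>] block_subset_range_set[of k X n \<omega>] by blast

lemma card_stripes_le:
  assumes "2 \<le> k n"
  shows "card (stripes k l X n \<omega>) \<le> k n * l n"
proof -
  have "card (stripes k l X n \<omega>) \<le> (\<Sum>j\<in>{1..num_blocks k X n \<omega>}. card (stripe k l X n \<omega> j))"
    unfolding stripes_def by (rule card_UN_le) simp
  also have "\<dots> \<le> (\<Sum>j\<in>{1..num_blocks k X n \<omega>}. l n)"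
    by (intro sum_mono) (auto simp: stripe_def card_top_elems_le)
  also have "\<dots> \<le> k n * l n" using num_blocks_le[of k n X \<omega>, OF assms] by simp
  finally show ?thesis .
qed

lemma block_minus_stripes_gap:
  assumes "1 \<le> j" "j < j'" "j' \<le> num_blocks k X n \<omega>"
    and "x \<in> block k X n \<omega> j - stripes k l X n \<omega>" "y \<in> block k X n \<omega> j'"
  shows "x + int (l n) \<le> y"
proof -
  have "stripe k l X n \<omega> j = top_elems (l n) (block k X n \<omega> j)"
    unfolding stripe_def using assms(2,3) by simp
  moreover have "stripe k l X n \<omega> j \<subseteq> stripes k l X n \<omega>"
    unfolding stripes_def using assms(1-3) by (intro UN_upper) auto
  ultimately have "x \<notin> top_elems (l n) (block k X n \<omega> j)" using assms(4) by blast
  moreover have "x \<in> block k X n \<omega> j" using assms(4) by blast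
  ultimately obtain z where "z \<in> block k X n \<omega> j" "x + int (l n) \<le> z"
    using top_elems_gap[OF finite_block[of k X n \<omega> j]] by blast
  with block_less[OF assms(1,2) _ assms(5)] show ?thesis by fastforce
qed

lemma sum_card_block_Int_le:
  assumes "finite C"
  shows "(\<Sum>j\<in>{1..num_blocks k X n \<omega>}. card (block k X n \<omega> j \<inter> C)) \<le> card C"
proof -
  have "(\<Sum>j\<in>{1..num_blocks k X n \<omega>}. card (block k X n \<omega> j \<inter> C))
      = card (\<Union>j\<in>{1..num_blocks k X n \<omega>}. block k X n \<omega> j \<inter> C)"
  proof (intro card_UN_disjoint[symmetric] ballI impI)
    fix i j assume "i \<in> {1..num_blocks k X n \<omega>}" "j \<in> {1..num_blocks k X n \<omega>}" "i \<noteq> j"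
    then show "(block k X n \<omega> i \<inter> C) \<inter> (block k X n \<omega> j \<inter> C) = {}"
      using disjoint_blocks[of i j k X n \<omega>] by auto
  qed (use assms in auto)
  also have "\<dots> \<le> card C" using assms by (intro card_mono) auto
  finally show ?thesis .
qed

section \<open>Maxima of the scenery over finite index sets\<close>

(* Condition D(u_n) at one level u and one gap m, with c in the role of alpha_{n,m}. *)
definition separated_mixing :: "'s measure \<Rightarrow> (int \<Rightarrow> 's \<Rightarrow> real) \<Rightarrow> real \<Rightarrow> nat \<Rightarrow> real \<Rightarrow> bool"
  where "separated_mixing N \<xi> u m c \<longleftrightarrow>
    (\<forall>I J. finite I \<and> I \<noteq> {} \<and> finite J \<and> J \<noteq> {} \<and> (\<forall>i\<in>I. \<forall>j\<in>J. i + int m \<le> j) \<longrightarrow>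
       \<bar>prob_max_le N \<xi> (I \<union> J) u - prob_max_le N \<xi> I u * prob_max_le N \<xi> J u\<bar> \<le> c)"

lemma stationary_measure_gt_eq:
  fixes \<xi> :: "int \<Rightarrow> 's \<Rightarrow> real"
  assumes meas: "\<And>i. \<xi> i \<in> borel_measurable N"
    and stationary: "\<And>h. distr N (PiM UNIV (\<lambda>_. borel)) (\<lambda>s i. \<xi> (i + h) s)
                         = distr N (PiM UNIV (\<lambda>_. borel)) (\<lambda>s i. \<xi> i s)"
  shows "measure N {s \<in> space N. \<xi> h s > u} = measure N {s \<in> space N. \<xi> 0 s > u}"
proof -
  let ?PM = "PiM (UNIV :: int set) (\<lambda>_. borel :: real measure)"
  let ?A = "{g \<in> space ?PM. u < g 0}"
  have A: "?A \<in> sets ?PM" by measurable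
  have shift_meas: "(\<lambda>s i. \<xi> (i + h') s) \<in> measurable N ?PM" for h'
    by (rule measurable_PiM_single') (auto simp: meas)
  have eq: "measure (distr N ?PM (\<lambda>s i. \<xi> (i + h') s)) ?A = measure N {s \<in> space N. \<xi> h' s > u}"
    for h'
    by (subst measure_distr[OF shift_meas A]) (auto simp: space_PiM intro!: arg_cong[where f="measure N"])
  have "measure N {s \<in> space N. \<xi> h s > u} = measure (distr N ?PM (\<lambda>s i. \<xi> (i + h) s)) ?A"
    by (rule eq[symmetric])
  also have "\<dots> = measure (distr N ?PM (\<lambda>s i. \<xi> (i + 0) s)) ?A"
    using stationary[of h] by simp
  also have "\<dots> = measure N {s \<in> space N. \<xi> 0 s > u}" by (rule eq)
  finally show ?thesis .
qed

context prob_space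
begin

lemma prob_max_le_nonneg: "0 \<le> prob_max_le M \<xi> B u"
  unfolding prob_max_le_def by simp

lemma prob_max_le_le_1: "prob_max_le M \<xi> B u \<le> 1"
  unfolding prob_max_le_def by simp

lemma prob_max_le_empty: "prob_max_le M \<xi> {} u = 1"
  unfolding prob_max_le_def by (simp add: prob_space)

lemma separated_mixing_nonneg: "separated_mixing M \<xi> u m c \<Longrightarrow> 0 \<le> c"
  unfolding separated_mixing_def
  by (erule allE[of _ "{0}"], erule allE[of _ "{int m}"]) auto

lemma separated_mixing_bound:
  assumes "separated_mixing M \<xi> u m c" "finite I" "finite J" "\<forall>i\<in>I. \<forall>j\<in>J. i + int m \<le> j"
  shows "\<bar>prob_max_le M \<xi> (I \<union> J) u - prob_max_le M \<xi> I u * prob_max_le M \<xi> J u\<bar> \<le> c"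
proof (cases "I = {} \<or> J = {}")
  case True
  then show ?thesis using separated_mixing_nonneg[OF assms(1)] by (auto simp: prob_max_le_empty)
qed (use assms in \<open>auto simp: separated_mixing_def\<close>)

lemma prob_max_le_diff_le:
  assumes meas: "\<And>i. \<xi> i \<in> borel_measurable M"
    and "A \<subseteq> B" "finite B"
    and p: "\<And>i. prob {s \<in> space M. \<xi> i s > u} \<le> p"
  shows "\<bar>prob_max_le M \<xi> A u - prob_max_le M \<xi> B u\<bar> \<le> real (card (B - A)) * p"
proof -
  let ?E = "\<lambda>C. {s \<in> space M. \<forall>i\<in>C. \<xi> i s \<le> u}"
  let ?F = "\<lambda>i. {s \<in> space M. \<xi> i s > u}"
  have [measurable]: "\<xi> i \<in> borel_measurable M" for i by (fact meas)
  have "finite A" by (rule finite_subset[OF assms(2,3)])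
  then have events: "?E A \<in> events" "?E B \<in> events" "?F i \<in> events" for i
    using assms(3) by measurable
  have EB: "?E B \<subseteq> ?E A" using assms(2) by auto
  then have "prob (?E B) \<le> prob (?E A)" using events by (intro finite_measure_mono)
  moreover have "prob (?E A) - prob (?E B) = prob (?E A - ?E B)"
    using EB events by (simp add: finite_measure_Diff)
  moreover have "prob (?E A - ?E B) \<le> prob (\<Union>i\<in>B - A. ?F i)"
    using assms(2) events by (intro finite_measure_mono) auto
  moreover have "prob (\<Union>i\<in>B - A. ?F i) \<le> (\<Sum>i\<in>B - A. prob (?F i))"
    using assms(3) events by (intro finite_measure_subadditive_finite) auto
  moreover have "(\<Sum>i\<in>B - A. prob (?F i)) \<le> real (card (B - A)) * p"
    using p by (rule sum_bounded_above)
  ultimately show ?thesis unfolding prob_max_le_def by linarith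
qed

lemma prob_max_le_remove_stripes:
  assumes meas: "\<And>i. \<xi> i \<in> borel_measurable M"
    and p: "\<And>i. prob {s \<in> space M. \<xi> i s > u} \<le> p"
    and k: "2 \<le> k n"
  shows "\<bar>prob_max_le M \<xi> (range_set X n \<omega>) u
          - prob_max_le M \<xi> (range_set X n \<omega> - stripes k l X n \<omega>) u\<bar> \<le> real (k n * l n) * p"
proof -
  let ?S = "range_set X n \<omega>" and ?L = "stripes k l X n \<omega>"
  have "0 \<le> p" using p[of 0] by (rule order_trans[OF measure_nonneg])
  have "?S - (?S - ?L) = ?L" using stripes_subset_range_set[of k l X n \<omega>] by blast
  then have "\<bar>prob_max_le M \<xi> (?S - ?L) u - prob_max_le M \<xi> ?S u\<bar> \<le> real (card ?L) * p"
    using prob_max_le_diff_le[where \<xi>=\<xi>, OF meas _ finite_range_set[of X n \<omega>] p, of "?S - ?L"]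
    by auto
  also have "\<dots> \<le> real (k n * l n) * p"
    using card_stripes_le[where k=k and n=n, OF k] \<open>0 \<le> p\<close>
    by (intro mult_right_mono of_nat_mono)
  finally show ?thesis by (simp add: abs_minus_commute)
qed

lemma prod_prob_max_le_remove_stripes:
  assumes meas: "\<And>i. \<xi> i \<in> borel_measurable M"
    and p: "\<And>i. prob {s \<in> space M. \<xi> i s > u} \<le> p"
    and k: "2 \<le> k n"
  shows "\<bar>(\<Prod>j\<in>{1..num_blocks k X n \<omega>}. prob_max_le M \<xi> (block k X n \<omega> j - stripes k l X n \<omega>) u)
          - (\<Prod>j\<in>{1..num_blocks k X n \<omega>}. prob_max_le M \<xi> (block k X n \<omega> j) u)\<bar>
         \<le> real (k n * l n) * p"
proof -
  let ?B = "block k X n \<omega>" and ?L = "stripes k l X n \<omega>" and ?J = "{1..num_blocks k X n \<omega>}"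
  have "0 \<le> p" using p[of 0] by (rule order_trans[OF measure_nonneg])
  have "finite ?L" by (rule finite_subset[OF stripes_subset_range_set finite_range_set])
  have "\<bar>(\<Prod>j\<in>?J. prob_max_le M \<xi> (?B j - ?L) u) - (\<Prod>j\<in>?J. prob_max_le M \<xi> (?B j) u)\<bar>
      \<le> (\<Sum>j\<in>?J. \<bar>prob_max_le M \<xi> (?B j - ?L) u - prob_max_le M \<xi> (?B j) u\<bar>)"
    using norm_prod_diff[of ?J "\<lambda>j. prob_max_le M \<xi> (?B j - ?L) u" "\<lambda>j. prob_max_le M \<xi> (?B j) u"]
    by (simp add: prob_max_le_nonneg prob_max_le_le_1)
  also have "\<dots> \<le> (\<Sum>j\<in>?J. real (card (?B j \<inter> ?L)) * p)"
  proof (rule sum_mono)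
    fix j
    have "?B j - (?B j - ?L) = ?B j \<inter> ?L" by blast
    then show "\<bar>prob_max_le M \<xi> (?B j - ?L) u - prob_max_le M \<xi> (?B j) u\<bar>
        \<le> real (card (?B j \<inter> ?L)) * p"
      using prob_max_le_diff_le[where \<xi>=\<xi>, OF meas _ finite_block[of k X n \<omega> j] p, of "?B j - ?L"]
      by auto
  qed
  also have "\<dots> = real (\<Sum>j\<in>?J. card (?B j \<inter> ?L)) * p"
    by (simp add: sum_distrib_right)
  also have "\<dots> \<le> real (k n * l n) * p"
    using order_trans[OF sum_card_block_Int_le[OF \<open>finite ?L\<close>, of k X n \<omega>]
        card_stripes_le[where k=k and n=n, OF k]] \<open>0 \<le> p\<close>
    by (intro mult_right_mono of_nat_mono)
  finally show ?thesis .
qed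

lemma prob_max_le_UN_blocks_minus_stripes:
  assumes mixing: "separated_mixing M \<xi> u (l n) c"
  shows "m \<le> num_blocks k X n \<omega> \<Longrightarrow>
    \<bar>prob_max_le M \<xi> (\<Union>j\<in>{1..m}. block k X n \<omega> j - stripes k l X n \<omega>) u
     - (\<Prod>j\<in>{1..m}. prob_max_le M \<xi> (block k X n \<omega> j - stripes k l X n \<omega>) u)\<bar> \<le> real m * c"
proof (induction m)
  case 0
  then show ?case by (simp add: prob_max_le_empty)
next
  case (Suc m)
  let ?L = "stripes k l X n \<omega>"
  let ?P = "\<lambda>B. prob_max_le M \<xi> B u"
  let ?U = "\<Union>j\<in>{1..m}. block k X n \<omega> j - ?L" and ?V = "block k X n \<omega> (Suc m) - ?L"
  let ?\<Pi> = "\<Prod>j\<in>{1..m}. ?P (block k X n \<omega> j - ?L)"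
  have gap: "\<forall>i\<in>?U. \<forall>j\<in>?V. i + int (l n) \<le> j"
    using block_minus_stripes_gap[of _ "Suc m" k X n \<omega>] Suc.prems by fastforce
  have split: "?P (?U \<union> ?V) - ?\<Pi> * ?P ?V = (?P (?U \<union> ?V) - ?P ?U * ?P ?V) + (?P ?U - ?\<Pi>) * ?P ?V"
    by (simp add: algebra_simps)
  have mixing_step: "\<bar>?P (?U \<union> ?V) - ?P ?U * ?P ?V\<bar> \<le> c"
    by (intro separated_mixing_bound[OF mixing] gap) (simp_all add: finite_block)
  have "\<bar>(?P ?U - ?\<Pi>) * ?P ?V\<bar> \<le> \<bar>?P ?U - ?\<Pi>\<bar>"
    using prob_max_le_nonneg[of \<xi> ?V u] prob_max_le_le_1[of \<xi> ?V u]
    by (simp add: abs_mult mult_left_le)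
  also have "\<dots> \<le> real m * c" using Suc by simp
  finally have bound: "\<bar>?P (?U \<union> ?V) - ?\<Pi> * ?P ?V\<bar> \<le> c + real m * c"
    unfolding split using mixing_step by (intro order_trans[OF abs_triangle_ineq add_mono])
  have UN: "(\<Union>j\<in>{1..Suc m}. block k X n \<omega> j - ?L) = ?U \<union> ?V"
    by (auto simp: atLeastAtMostSuc_conv)
  have prod: "(\<Prod>j\<in>{1..Suc m}. ?P (block k X n \<omega> j - ?L)) = ?\<Pi> * ?P ?V"
    by (simp add: atLeastAtMostSuc_conv mult.commute)
  show ?case unfolding UN prod using bound by (simp add: distrib_right)
qed

lemma prob_max_le_factorizes_over_blocks:
  assumes mixing: "separated_mixing M \<xi> u (l n) c" and k: "2 \<le> k n"
  shows "\<bar>prob_max_le M \<xi> (range_set X n \<omega> - stripes k l X n \<omega>) u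
          - (\<Prod>j\<in>{1..num_blocks k X n \<omega>}.
               prob_max_le M \<xi> (block k X n \<omega> j - stripes k l X n \<omega>) u)\<bar> \<le> real (k n) * c"
proof -
  have "range_set X n \<omega> - stripes k l X n \<omega>
      = (\<Union>j\<in>{1..num_blocks k X n \<omega>}. block k X n \<omega> j - stripes k l X n \<omega>)"
    using UN_block_eq_range_set[of k X n \<omega>] by blast
  then have "\<bar>prob_max_le M \<xi> (range_set X n \<omega> - stripes k l X n \<omega>) u
          - (\<Prod>j\<in>{1..num_blocks k X n \<omega>}.
               prob_max_le M \<xi> (block k X n \<omega> j - stripes k l X n \<omega>) u)\<bar>
      \<le> real (num_blocks k X n \<omega>) * c"
    using prob_max_le_UN_blocks_minus_stripes[where l=l and n=n and k=k and X=X and \<omega>=\<omega>,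
        OF mixing order_refl]
    by simp
  also have "\<dots> \<le> real (k n) * c"
    using num_blocks_le[where k=k and n=n, OF k] separated_mixing_nonneg[OF mixing]
    by (intro mult_right_mono) auto
  finally show ?thesis .
qed

theorem stripes_and_blocks_negligible:
  assumes meas: "\<And>i. \<xi> i \<in> borel_measurable M"
    and p: "\<And>n i. prob {s \<in> space M. \<xi> i s > u n} \<le> p n"
    and mixing: "\<And>n. separated_mixing M \<xi> (u n) (l n) (c n)"
    and k: "\<forall>\<^sub>F n in sequentially. 2 \<le> k n"
    and stripes_vanish: "(\<lambda>n. real (k n * l n) * p n) \<longlonglongrightarrow> 0"
    and mixing_vanish: "(\<lambda>n. real (k n) * c n) \<longlonglongrightarrow> 0"
  shows "(\<lambda>n. prob_max_le M \<xi> (range_set X n \<omega>) (u n)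
          - prob_max_le M \<xi> (range_set X n \<omega> - stripes k l X n \<omega>) (u n)) \<longlonglongrightarrow> 0
   \<and> (\<lambda>n. prob_max_le M \<xi> (range_set X n \<omega> - stripes k l X n \<omega>) (u n)
          - (\<Prod>j\<in>{1..num_blocks k X n \<omega>}.
               prob_max_le M \<xi> (block k X n \<omega> j - stripes k l X n \<omega>) (u n))) \<longlonglongrightarrow> 0
   \<and> (\<lambda>n. (\<Prod>j\<in>{1..num_blocks k X n \<omega>}.
               prob_max_le M \<xi> (block k X n \<omega> j - stripes k l X n \<omega>) (u n))
          - (\<Prod>j\<in>{1..num_blocks k X n \<omega>}.
               prob_max_le M \<xi> (block k X n \<omega> j) (u n))) \<longlonglongrightarrow> 0"
    (is "?A \<and> ?B \<and> ?C")
proof -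
  have tendsto_0: "f \<longlonglongrightarrow> 0" if bound: "\<And>n. 2 \<le> k n \<Longrightarrow> \<bar>f n\<bar> \<le> g n" and "g \<longlonglongrightarrow> 0"
    for f g :: "nat \<Rightarrow> real"
  proof (rule Lim_null_comparison[OF _ \<open>g \<longlonglongrightarrow> 0\<close>])
    show "\<forall>\<^sub>F n in sequentially. norm (f n) \<le> g n"
      using k by eventually_elim (simp add: bound)
  qed
  have ?A
    by (rule tendsto_0[OF _ stripes_vanish]) (rule prob_max_le_remove_stripes[OF meas p])
  moreover have ?B
    by (rule tendsto_0[OF _ mixing_vanish])
      (rule prob_max_le_factorizes_over_blocks[where l=l, OF mixing])
  moreover have ?C
    by (rule tendsto_0[OF _ stripes_vanish]) (rule prod_prob_max_le_remove_stripes[OF meas p])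
  ultimately show ?thesis by blast
qed

end

section \<open>Asymptotics\<close>

lemma sublinear_times_inverse_scale_tendsto_0:
  fixes s :: "nat \<Rightarrow> nat" and p :: "nat \<Rightarrow> real"
  assumes s: "(\<lambda>n. real (s n) / real n) \<longlonglongrightarrow> 0" and p: "(\<lambda>n. real n * p n) \<longlonglongrightarrow> \<tau>"
  shows "(\<lambda>n. real (s n) * p n) \<longlonglongrightarrow> 0"
proof (rule Lim_transform_eventually)
  show "(\<lambda>n. real (s n) / real n * (real n * p n)) \<longlonglongrightarrow> 0"
    using tendsto_mult[OF s p] by simp
  show "\<forall>\<^sub>F n in sequentially. real (s n) / real n * (real n * p n) = real (s n) * p n"
    using eventually_gt_at_top[of 0] by eventually_elim simp
qed

lemma count_times_coefficient_tendsto_0: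
  fixes k l :: "nat \<Rightarrow> nat" and c :: "nat \<Rightarrow> real"
  assumes kl: "(\<lambda>n. real (k n * l n) / real n) \<longlonglongrightarrow> 0" and l: "\<And>n. 0 < l n"
    and c: "(\<lambda>n. real n ^ 2 / real (k n) * c n) \<longlonglongrightarrow> 0"
  shows "(\<lambda>n. real (k n) * c n) \<longlonglongrightarrow> 0"
proof (rule Lim_transform_eventually)
  have "(\<lambda>n. real (k n) / real n) \<longlonglongrightarrow> 0"
  proof (rule tendsto_sandwich[OF _ _ tendsto_const kl])
    show "\<forall>\<^sub>F n in sequentially. 0 \<le> real (k n) / real n" by simp
    show "\<forall>\<^sub>F n in sequentially. real (k n) / real n \<le> real (k n * l n) / real n"
      using l by (intro always_eventually allI divide_right_mono of_nat_mono) (simp_all add: Suc_le_eq)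
  qed
  then show "(\<lambda>n. (real (k n) / real n) ^ 2 * (real n ^ 2 / real (k n) * c n)) \<longlonglongrightarrow> 0"
    using tendsto_mult[OF tendsto_power[of _ 0 _ 2] c] by simp
  show "\<forall>\<^sub>F n in sequentially.
      (real (k n) / real n) ^ 2 * (real n ^ 2 / real (k n) * c n) = real (k n) * c n"
    using eventually_gt_at_top[of 0] by eventually_elim (simp add: power2_eq_square)
qed

theorem lemma1:
  fixes M :: "'w measure" and X :: "nat \<Rightarrow> 'w \<Rightarrow> int" and \<alpha> :: real
    and N :: "'s measure" and \<xi> :: "int \<Rightarrow> 's \<Rightarrow> real"
    and u :: "nat \<Rightarrow> real" and \<tau> :: real
    and a :: "nat \<Rightarrow> nat \<Rightarrow> real" and l :: "nat \<Rightarrow> nat" and k :: "nat \<Rightarrow> nat"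
  assumes walk_space: "prob_space M"
    and X_meas: "\<And>i. X i \<in> measurable M (count_space UNIV)"
    and X_indep: "prob_space.indep_vars M (\<lambda>_. count_space UNIV) X {1..}"
    and X_ident: "\<And>i. i \<ge> 1 \<Longrightarrow> distr M (count_space UNIV) (X i) = distr M (count_space UNIV) (X 1)"
    and alpha: "0 < \<alpha>" "\<alpha> < 1"
    and attraction: "centered_domain_of_attraction M X \<alpha>"
    and scen_space: "prob_space N"
    and \<xi>_meas: "\<And>i. \<xi> i \<in> borel_measurable N"
    and stationary: "\<And>h. distr N (PiM UNIV (\<lambda>_. borel)) (\<lambda>s i. \<xi> (i + h) s)
                         = distr N (PiM UNIV (\<lambda>_. borel)) (\<lambda>s i. \<xi> i s)"
    and tau: "\<tau> \<ge> 0"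
      "(\<lambda>n. real n * measure N {s \<in> space N. \<xi> 0 s > u n}) \<longlonglongrightarrow> \<tau>"
    and D_l_pos: "\<And>n. l n > 0"
    and D_alpha: "(\<lambda>n. a n (l n)) \<longlonglongrightarrow> 0"
    and D_l_small: "(\<lambda>n. real (l n) / real n) \<longlonglongrightarrow> 0"
    and D_mixing: "\<And>n m I J. finite I \<Longrightarrow> I \<noteq> {} \<Longrightarrow> finite J \<Longrightarrow> J \<noteq> {} \<Longrightarrow>
         (\<forall>i\<in>I. \<forall>j\<in>J. i + int m \<le> j) \<Longrightarrow>
         \<bar>prob_max_le N \<xi> (I \<union> J) (u n) - prob_max_le N \<xi> I (u n) * prob_max_le N \<xi> J (u n)\<bar>
           \<le> a n m"
    and D'_k: "filterlim k at_top sequentially"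
    and D'_alpha: "(\<lambda>n. real n ^ 2 / real (k n) * a n (l n)) \<longlonglongrightarrow> 0"
    and D'_kl: "(\<lambda>n. real (k n * l n) / real n) \<longlonglongrightarrow> 0"
    and D'_sum: "(\<lambda>n. real n * (\<Sum>j\<in>{1..n div k n}.
                   measure N {s \<in> space N. \<xi> 0 s > u n \<and> \<xi> (int j) s > u n})) \<longlonglongrightarrow> 0"
  shows "AE \<omega> in M.
     (\<lambda>n. prob_max_le N \<xi> (range_set X n \<omega>) (u n)
          - prob_max_le N \<xi> (range_set X n \<omega> - stripes k l X n \<omega>) (u n)) \<longlonglongrightarrow> 0
   \<and> (\<lambda>n. prob_max_le N \<xi> (range_set X n \<omega> - stripes k l X n \<omega>) (u n)
          - (\<Prod>j\<in>{1..num_blocks k X n \<omega>}.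
               prob_max_le N \<xi> (block k X n \<omega> j - stripes k l X n \<omega>) (u n))) \<longlonglongrightarrow> 0
   \<and> (\<lambda>n. (\<Prod>j\<in>{1..num_blocks k X n \<omega>}.
               prob_max_le N \<xi> (block k X n \<omega> j - stripes k l X n \<omega>) (u n))
          - (\<Prod>j\<in>{1..num_blocks k X n \<omega>}.
               prob_max_le N \<xi> (block k X n \<omega> j) (u n))) \<longlonglongrightarrow> 0"
proof -
  define p where "p n = measure N {s \<in> space N. \<xi> 0 s > u n}" for n
  have p: "measure N {s \<in> space N. \<xi> i s > u n} \<le> p n" for n i
    unfolding p_def using stationary_measure_gt_eq[OF \<xi>_meas stationary, where h=i and u="u n"]
    by simp
  have mixing: "separated_mixing N \<xi> (u n) (l n) (a n (l n))" for n
    unfolding separated_mixing_def using D_mixing by blast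
  have k_ge_2: "\<forall>\<^sub>F n in sequentially. 2 \<le> k n"
    using D'_k by (simp add: filterlim_at_top)
  have stripes_vanish: "(\<lambda>n. real (k n * l n) * p n) \<longlonglongrightarrow> 0"
    using D'_kl tau(2) unfolding p_def by (rule sublinear_times_inverse_scale_tendsto_0)
  have mixing_vanish: "(\<lambda>n. real (k n) * a n (l n)) \<longlonglongrightarrow> 0"
    using D'_kl D_l_pos D'_alpha by (rule count_times_coefficient_tendsto_0)
  show ?thesis
    by (intro AE_I2 prob_space.stripes_and_blocks_negligible[OF scen_space \<xi>_meas p mixing k_ge_2
          stripes_vanish mixing_vanish])
qed

end
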